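(* Let $G=(V,E,w)$ be a finite connected weighted graph and $(x,y)\in E$. Let $\mathbf d,\mathbf d'$ be two vectors of positive edge lengths on $E$ which differ only on the edge $(x,y)$, with $d(x,y)\le d'(x,y)$. Then for every function $g:V\to\mathbb R$ that is $1$-Lipschitz with respect to $\mathbf d'$ and satisfies $g(y)-g(x)=d'(x,y)$, there exists a function $g':V\to\mathbb R$ that is $1$-Lipschitz with respect to $\mathbf d$, satisfies $g'(y)-g'(x)=d(x,y)$, and satisfies $d(x,y)-d'(x,y)\le g'(z)-g(z)\le 0$ for all $z\in V$.
   Context: A function $f:V\to\mathbb R$ is $1$-Lipschitz with respect to an edge-length vector $\mathbf d$ (written $f\in Lip(1)$) if $|f(s)-f(t)|\le d(s,t)$ for every edge $(s,t)\in E$. *)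

theory Defs
  imports Complex_Main
begin

definition weighted_graph :: "'a set \<Rightarrow> ('a \<times> 'a) set \<Rightarrow> ('a \<times> 'a \<Rightarrow> real) \<Rightarrow> bool" where
  "weighted_graph V E w \<longleftrightarrow> finite V \<and> E \<subseteq> V \<times> V \<and> sym E \<and> irrefl E
     \<and> (\<forall>(s,t)\<in>E. w (s,t) > 0 \<and> w (s,t) = w (t,s))"

definition connected_graph :: "'a set \<Rightarrow> ('a \<times> 'a) set \<Rightarrow> bool" where
  "connected_graph V E \<longleftrightarrow> (\<forall>u\<in>V. \<forall>v\<in>V. (u,v) \<in> E\<^sup>*)"

definition edge_lengths :: "('a \<times> 'a) set \<Rightarrow> ('a \<times> 'a \<Rightarrow> real) \<Rightarrow> bool" where
  "edge_lengths E d \<longleftrightarrow> (\<forall>(s,t)\<in>E. d (s,t) > 0 \<and> d (s,t) = d (t,s))"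

definition Lip1 :: "('a \<times> 'a) set \<Rightarrow> ('a \<times> 'a \<Rightarrow> real) \<Rightarrow> ('a \<Rightarrow> real) \<Rightarrow> bool" where
  "Lip1 E d f \<longleftrightarrow> (\<forall>(s,t)\<in>E. \<bar>f s - f t\<bar> \<le> d (s,t))"

end

theory Submission
  imports Defs
begin

text \<open>Let \<delta> = d'(x,y) - d(x,y) and c = g x + d(x,y) = g y - \<delta>. Collapsing the value range
  [c, c + \<delta>] of g to the point c (keeping g below c, lowering it by \<delta> above c + \<delta>) is
  a nonexpansive map of the reals, so it preserves 1-Lipschitzness for d' and moves every value
  down by at most \<delta>; it fixes g x and lowers g y by exactly \<delta>, so the gap across (x,y)
  shrinks to d(x,y), which is all the new length of that edge demands.\<close>

definition collapse :: "real \<Rightarrow> real \<Rightarrow> real \<Rightarrow> real" where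
  "collapse c \<delta> t = max (t - \<delta>) (min t c)"

lemma collapse_nonexpansive:
  assumes "\<delta> \<ge> 0"
  shows "\<bar>collapse c \<delta> s - collapse c \<delta> t\<bar> \<le> \<bar>s - t\<bar>"
  using assms by (simp add: collapse_def max_def min_def abs_if split: if_splits)

lemma collapse_bounds:
  assumes "\<delta> \<ge> 0"
  shows "t - \<delta> \<le> collapse c \<delta> t" and "collapse c \<delta> t \<le> t"
  using assms by (auto simp: collapse_def)

lemma collapse_below:
  assumes "\<delta> \<ge> 0" and "t \<le> c"
  shows "collapse c \<delta> t = t"
  using assms by (simp add: collapse_def)

lemma collapse_above:
  assumes "c + \<delta> \<le> t"
  shows "collapse c \<delta> t = t - \<delta>"
  using assms by (simp add: collapse_def max_def min_def)

lemma Lip1_comp_nonexpansive: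
  assumes "Lip1 E d f" and "\<And>s t. \<bar>\<phi> s - \<phi> t\<bar> \<le> \<bar>s - t\<bar>"
  shows "Lip1 E d (\<phi> \<circ> f)"
  using assms unfolding Lip1_def by (fastforce intro: order_trans)

lemma Lip1_change_edge_length:
  assumes "Lip1 E d' f"
    and "\<forall>e\<in>E. e \<noteq> (x, y) \<and> e \<noteq> (y, x) \<longrightarrow> d e = d' e"
    and "d (y, x) = d (x, y)" and "\<bar>f y - f x\<bar> \<le> d (x, y)"
  shows "Lip1 E d f"
  unfolding Lip1_def
proof clarify
  fix s t assume st: "(s, t) \<in> E"
  show "\<bar>f s - f t\<bar> \<le> d (s, t)"
  proof (cases "(s, t) = (x, y) \<or> (s, t) = (y, x)")
    case True
    then show ?thesis using assms(3,4) by (auto simp: abs_minus_commute)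
  next
    case False
    then show ?thesis using assms(1,2) st unfolding Lip1_def by fastforce
  qed
qed

theorem lemma5p2:
  fixes V :: "'a set" and E :: "('a \<times> 'a) set" and w d d' :: "'a \<times> 'a \<Rightarrow> real"
    and x y :: 'a and g :: "'a \<Rightarrow> real"
  assumes "weighted_graph V E w" and "connected_graph V E"
    and "(x, y) \<in> E"
    and "edge_lengths E d" and "edge_lengths E d'"
    and "\<forall>e\<in>E. e \<noteq> (x, y) \<and> e \<noteq> (y, x) \<longrightarrow> d e = d' e"
    and "d (x, y) \<le> d' (x, y)"
    and "Lip1 E d' g" and "g y - g x = d' (x, y)"
  shows "\<exists>g' :: 'a \<Rightarrow> real. Lip1 E d g' \<and> g' y - g' x = d (x, y)
           \<and> (\<forall>z\<in>V. d (x, y) - d' (x, y) \<le> g' z - g z \<and> g' z - g z \<le> 0)"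
proof -
  define \<delta> where "\<delta> = d' (x, y) - d (x, y)"
  define c where "c = g x + d (x, y)"
  define g' where "g' = collapse c \<delta> \<circ> g"
  have \<delta>_nonneg: "\<delta> \<ge> 0" using assms(7) by (simp add: \<delta>_def)
  have d_xy: "d (x, y) > 0" "d (y, x) = d (x, y)"
    using assms(3,4) unfolding edge_lengths_def by auto
  have "g' x = g x"
    using collapse_below[OF \<delta>_nonneg] d_xy(1) by (simp add: g'_def c_def)
  moreover have "g' y = g y - \<delta>"
    using collapse_above assms(9) by (simp add: g'_def c_def \<delta>_def)
  ultimately have gap: "g' y - g' x = d (x, y)"
    using assms(9) by (simp add: \<delta>_def)
  have Lip1_d': "Lip1 E d' g'"
    unfolding g'_def using assms(8) collapse_nonexpansive[OF \<delta>_nonneg]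
    by (rule Lip1_comp_nonexpansive)
  have "Lip1 E d g'"
    by (rule Lip1_change_edge_length[OF Lip1_d' assms(6) d_xy(2)]) (use gap d_xy(1) in simp)
  moreover have "\<forall>z\<in>V. d (x, y) - d' (x, y) \<le> g' z - g z \<and> g' z - g z \<le> 0"
  proof
    fix z
    show "d (x, y) - d' (x, y) \<le> g' z - g z \<and> g' z - g z \<le> 0"
      using collapse_bounds[OF \<delta>_nonneg, where t = "g z" and c = c] by (simp add: g'_def \<delta>_def)
  qed
  ultimately show ?thesis using gap by blast
qed

end
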